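(* Let $\Sigma\in\mathbb{R}^{p\times p}$ be positive definite. Then $$\{B\in\mathbb{D}:\ \Sigma=(I-B)^{-T}\Omega(I-B)^{-1}\text{ for some }\Omega\in\mathcal{D}^+\}=\{\tilde B(\pi):\ \pi\text{ a permutation of }[p]\}.$$
   Context: $\mathbb{D}$ is the set of real $p\times p$ matrices whose directed graph (edge $i\to j$ iff $b_{ij}\ne0$) is acyclic. $\mathcal{D}^+$ is the set of $p\times p$ diagonal matrices with positive diagonal entries. For a permutation $\pi$ of $[p]$ and a $p\times p$ matrix $A$, $(P_\pi A)_{ij}=a_{\pi(i)\pi(j)}$. For each $\pi$, write uniquely $P_\pi\Sigma^{-1}=(I-L)D^{-1}(I-L)^T$ with $L$ strictly lower triangular and $D\in\mathcal{D}^+$, and set $\tilde B(\pi)=P_{\pi^{-1}}L$. *)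

theory Defs
  imports "HOL-Analysis.Analysis"
begin

(* p x p real matrices, indices ranging over a finite linearly ordered type 'n
  (playing the role of [p] with its usual order). *)

definition pos_def_mat :: "real^'n^'n \<Rightarrow> bool" where
  "pos_def_mat S \<longleftrightarrow> transpose S = S \<and> (\<forall>x. x \<noteq> 0 \<longrightarrow> x \<bullet> (S *v x) > 0)"

definition dag_mat :: "real^'n^'n \<Rightarrow> bool" where
  "dag_mat B \<longleftrightarrow> acyclic {(i, j). B $ i $ j \<noteq> 0}"

definition pos_diag :: "real^'n^'n \<Rightarrow> bool" where
  "pos_diag D \<longleftrightarrow> (\<forall>i j. i \<noteq> j \<longrightarrow> D $ i $ j = 0) \<and> (\<forall>i. D $ i $ i > 0)"

definition strictly_lower :: "real^('n::{finite,linorder})^('n::{finite,linorder}) \<Rightarrow> bool" where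
  "strictly_lower L \<longleftrightarrow> (\<forall>i j. i \<le> j \<longrightarrow> L $ i $ j = 0)"

definition perm_mat_act :: "('n \<Rightarrow> 'n) \<Rightarrow> real^'n^'n \<Rightarrow> real^'n^'n" where
  "perm_mat_act \<pi> A = (\<chi> i j. A $ \<pi> i $ \<pi> j)"

definition Btilde :: "real^('n::{finite,linorder})^('n::{finite,linorder}) \<Rightarrow> ('n \<Rightarrow> 'n) \<Rightarrow> real^('n::{finite,linorder})^('n::{finite,linorder})" where
  "Btilde S \<pi> = perm_mat_act (inv \<pi>)
     (THE L. \<exists>D. strictly_lower L \<and> pos_diag D \<and>
        perm_mat_act \<pi> (matrix_inv S) =
          (mat 1 - L) ** matrix_inv D ** transpose (mat 1 - L))"

end

theory Submission
  imports Defs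
begin

text \<open>
  An acyclic \<open>B\<close> becomes strictly lower triangular after permuting rows and columns by a
  topological order \<open>\<pi>\<close> of its graph. In these coordinates the model equation, rewritten for the
  precision matrix as \<open>\<Sigma>\<^sup>-\<^sup>1 = (I - B) \<Omega>\<^sup>-\<^sup>1 (I - B)\<^sup>T\<close>, is an \<open>LDL\<^sup>T\<close> factorisation of the
  permuted precision matrix with \<open>L = P\<^sub>\<pi> B\<close> and \<open>D = P\<^sub>\<pi> \<Omega>\<close>. Since a positive definite matrix has
  exactly one \<open>LDL\<^sup>T\<close> factorisation, \<open>B\<close> must be \<open>Btilde \<Sigma> \<pi>\<close>. Conversely, \<open>Btilde \<Sigma> \<pi>\<close> is strictly
  lower triangular after permuting by \<open>\<pi>\<close>, hence acyclic, and the permuted-back diagonal factor of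
  the factorisation is a valid \<open>\<Omega>\<close>.
\<close>

lemma finite_linorder_less_induct:
  fixes P :: "'a::{finite,linorder} \<Rightarrow> bool"
  assumes step: "\<And>i. (\<And>k. k < i \<Longrightarrow> P k) \<Longrightarrow> P i"
  shows "P i"
proof (induction "card {k. k < i}" arbitrary: i rule: less_induct)
  case less
  show ?case
  proof (rule step)
    fix k assume "k < i"
    then have "{m. m < k} \<subset> {m. m < i}" by auto
    then have "card {m. m < k} < card {m. m < i}" by (simp add: psubset_card_mono)
    then show "P k" using less by blast
  qed
qed

lemma sum_UNIV_eq_single:
  fixes f :: "'a::finite \<Rightarrow> 'b::comm_monoid_add"
  assumes "\<And>k. k \<noteq> i \<Longrightarrow> f k = 0"
  shows "(\<Sum>k\<in>UNIV. f k) = f i"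
  using sum.mono_neutral_right[of UNIV "{i}" f] assms by auto

lemma mat_1_entry: "(mat 1 :: 'a::zero_neq_one^'n^'n) $ i $ j = (if i = j then 1 else 0)"
  by (simp add: mat_def)

lemma matrix_inv_unique:
  fixes A B :: "'a::field^'n^'n"
  assumes "A ** B = mat 1"
  shows "matrix_inv A = B"
proof -
  have "B ** A = mat 1" using assms matrix_left_right_inverse by blast
  then have "\<exists>A'. A ** A' = mat 1 \<and> A' ** A = mat 1" using assms by blast
  then have inv: "A ** matrix_inv A = mat 1 \<and> matrix_inv A ** A = mat 1"
    unfolding matrix_inv_def by (rule someI_ex)
  have "matrix_inv A = matrix_inv A ** (A ** B)"
    using assms by simp
  also have "\<dots> = B" using inv by (simp add: matrix_mul_assoc)
  finally show ?thesis .
qed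

lemma matrix_inv_right_left:
  fixes A :: "'a::field^'n^'n"
  assumes "invertible A"
  shows "A ** matrix_inv A = mat 1" "matrix_inv A ** A = mat 1"
proof -
  obtain B where "A ** B = mat 1" using assms invertible_right_inverse by blast
  then show "A ** matrix_inv A = mat 1" "matrix_inv A ** A = mat 1"
    using matrix_inv_unique matrix_left_right_inverse by metis+
qed

lemma matrix_inv_matrix_inv:
  fixes A :: "'a::field^'n^'n"
  assumes "invertible A"
  shows "matrix_inv (matrix_inv A) = A"
  using matrix_inv_right_left(2)[OF assms] by (rule matrix_inv_unique)

lemma invertible_if_kernel_trivial:
  fixes A :: "real^'n^'n"
  assumes "\<And>x. A *v x = 0 \<Longrightarrow> x = 0"
  shows "invertible A"
proof -
  have "inj ((*v) A)" using assms linear_injective_0[of "(*v) A"] by simp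
  then have "surj ((*v) A)" using linear_injective_imp_surjective[of "(*v) A"] by simp
  then show ?thesis using matrix_right_invertible_surjective invertible_right_inverse by blast
qed

definition lower_triangular ::
    "'a::zero^('n::{finite,linorder})^('n::{finite,linorder}) \<Rightarrow> bool" where
  "lower_triangular M \<longleftrightarrow> (\<forall>i j. i < j \<longrightarrow> M $ i $ j = 0)"

definition unit_lower_triangular ::
    "'a::{zero,one}^('n::{finite,linorder})^('n::{finite,linorder}) \<Rightarrow> bool" where
  "unit_lower_triangular M \<longleftrightarrow> lower_triangular M \<and> (\<forall>i. M $ i $ i = 1)"

lemma unit_lower_triangular_iff_strictly_lower:
  fixes W :: "real^('n::{finite,linorder})^('n::{finite,linorder})"
  shows "unit_lower_triangular W \<longleftrightarrow> strictly_lower (mat 1 - W)"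
proof
  assume "unit_lower_triangular W"
  then show "strictly_lower (mat 1 - W)"
    unfolding unit_lower_triangular_def lower_triangular_def strictly_lower_def
    by (auto simp: mat_1_entry le_less)
next
  assume S: "strictly_lower (mat 1 - W)"
  have "W $ i $ j = 0" if "i < j" for i j
  proof -
    have "(mat 1 - W) $ i $ j = 0"
      using S less_imp_le[OF that] unfolding strictly_lower_def by blast
    then show ?thesis using less_imp_neq[OF that] by (simp add: mat_1_entry)
  qed
  moreover have "W $ i $ i = 1" for i
    using S unfolding strictly_lower_def
    by (metis order_refl mat_1_entry vector_minus_component eq_iff_diff_eq_0)
  ultimately show "unit_lower_triangular W"
    by (simp add: unit_lower_triangular_def lower_triangular_def)
qed

lemma lower_triangular_mult:
  fixes A B :: "'a::semiring_1^('n::{finite,linorder})^('n::{finite,linorder})"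
  assumes A: "lower_triangular A" and B: "lower_triangular B"
  shows "lower_triangular (A ** B)"
    and "(A ** B) $ i $ i = A $ i $ i * B $ i $ i"
proof -
  show "lower_triangular (A ** B)"
    unfolding lower_triangular_def
  proof (intro allI impI)
    fix i j :: 'n assume "i < j"
    have "A $ i $ k * B $ k $ j = 0" for k
    proof (cases "i < k")
      case False
      then have "k < j" using \<open>i < j\<close> by simp
      then show ?thesis using B by (simp add: lower_triangular_def)
    qed (use A in \<open>simp add: lower_triangular_def\<close>)
    then show "(A ** B) $ i $ j = 0" by (simp add: matrix_matrix_mult_def)
  qed
  have "A $ i $ k * B $ k $ i = 0" if "k \<noteq> i" for k
    using that A B unfolding lower_triangular_def
    by (metis linorder_neq_iff mult_zero_left mult_zero_right)
  then show "(A ** B) $ i $ i = A $ i $ i * B $ i $ i"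
    unfolding matrix_matrix_mult_def
    using sum_UNIV_eq_single[of i "\<lambda>k. A $ i $ k * B $ k $ i"] by simp
qed

lemma unit_lower_triangular_mult:
  "unit_lower_triangular A \<Longrightarrow> unit_lower_triangular B \<Longrightarrow> unit_lower_triangular (A ** B)"
  for A B :: "'a::semiring_1^('n::{finite,linorder})^('n::{finite,linorder})"
  unfolding unit_lower_triangular_def using lower_triangular_mult[of A B] by simp

lemma unit_lower_triangular_invertible:
  fixes M :: "real^('n::{finite,linorder})^('n::{finite,linorder})"
  assumes M: "unit_lower_triangular M"
  shows "invertible M"
proof (rule invertible_if_kernel_trivial)
  fix x assume Mx: "M *v x = 0"
  have "x $ i = 0" for i
  proof (induction i rule: finite_linorder_less_induct)
    case (1 i)
    have "M $ i $ k * x $ k = 0" if "k \<noteq> i" for k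
      using M 1 that unfolding unit_lower_triangular_def lower_triangular_def
      by (metis linorder_neq_iff mult_zero_left mult_zero_right)
    then have "(M *v x) $ i = M $ i $ i * x $ i"
      unfolding matrix_vector_mult_def
      using sum_UNIV_eq_single[of i "\<lambda>k. M $ i $ k * x $ k"] by simp
    then show ?case using M Mx by (simp add: unit_lower_triangular_def)
  qed
  then show "x = 0" by (simp add: vec_eq_iff)
qed

lemma unit_lower_triangular_right_inverse:
  fixes M N :: "'a::comm_ring_1^('n::{finite,linorder})^('n::{finite,linorder})"
  assumes M: "unit_lower_triangular M" and MN: "M ** N = mat 1"
  shows "unit_lower_triangular N"
proof -
  have Mu: "\<And>i k. i < k \<Longrightarrow> M $ i $ k = 0" and Md: "\<And>i. M $ i $ i = 1"
    using M by (auto simp: unit_lower_triangular_def lower_triangular_def)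
  have row: "N $ i $ j = (if i = j then 1 else 0)"
    if "\<And>k. k < i \<Longrightarrow> N $ k $ j = 0" for i j
  proof -
    have "M $ i $ k * N $ k $ j = 0" if "k \<noteq> i" for k
      using Mu that \<open>\<And>k. k < i \<Longrightarrow> N $ k $ j = 0\<close>
      by (metis linorder_neq_iff mult_zero_left mult_zero_right)
    then have "(M ** N) $ i $ j = N $ i $ j"
      unfolding matrix_matrix_mult_def
      using sum_UNIV_eq_single[of i "\<lambda>k. M $ i $ k * N $ k $ j"] by (simp add: Md)
    then show ?thesis using MN by (simp add: mat_1_entry)
  qed
  have upper: "\<forall>j. i < j \<longrightarrow> N $ i $ j = 0" for i
  proof (induction i rule: finite_linorder_less_induct)
    case (1 i)
    then show ?case using row by (metis less_trans)
  qed
  have "N $ i $ i = 1" for i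
    using row[of i i] upper by auto
  then show ?thesis using upper by (simp add: unit_lower_triangular_def lower_triangular_def)
qed

lemma unit_lower_triangular_matrix_inv:
  fixes M :: "real^('n::{finite,linorder})^('n::{finite,linorder})"
  assumes "unit_lower_triangular M"
  shows "unit_lower_triangular (matrix_inv M)"
  using unit_lower_triangular_right_inverse[OF assms]
    matrix_inv_right_left(1)[OF unit_lower_triangular_invertible[OF assms]] .

section \<open>Simultaneous permutation of rows and columns\<close>

lemma sum_UNIV_reindex_bij:
  fixes g :: "'a::finite \<Rightarrow> 'b::comm_monoid_add"
  assumes "bij \<pi>"
  shows "(\<Sum>k\<in>UNIV. g (\<pi> k)) = (\<Sum>k\<in>UNIV. g k)"
  using sum.reindex_bij_betw[of \<pi> UNIV UNIV g] assms by (simp add: bij_betw_def)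

lemma perm_mat_act_mult:
  assumes "bij \<pi>"
  shows "perm_mat_act \<pi> (A ** B) = perm_mat_act \<pi> A ** perm_mat_act \<pi> B"
proof -
  have "(\<Sum>k\<in>UNIV. A $ \<pi> i $ k * B $ k $ \<pi> j) =
      (\<Sum>k\<in>UNIV. A $ \<pi> i $ \<pi> k * B $ \<pi> k $ \<pi> j)" for i j
    using sum_UNIV_reindex_bij[OF assms, of "\<lambda>k. A $ \<pi> i $ k * B $ k $ \<pi> j"] by simp
  then show ?thesis
    by (simp add: vec_eq_iff perm_mat_act_def matrix_matrix_mult_def)
qed

lemma perm_mat_act_mat_1:
  assumes "bij \<pi>"
  shows "perm_mat_act \<pi> (mat 1) = mat 1"
  using assms by (simp add: vec_eq_iff perm_mat_act_def mat_def bij_is_inj inj_eq)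

lemma perm_mat_act_diff: "perm_mat_act \<pi> (A - B) = perm_mat_act \<pi> A - perm_mat_act \<pi> B"
  by (simp add: vec_eq_iff perm_mat_act_def)

lemma perm_mat_act_transpose: "perm_mat_act \<pi> (transpose A) = transpose (perm_mat_act \<pi> A)"
  by (simp add: vec_eq_iff perm_mat_act_def transpose_def)

lemma perm_mat_act_inv_left:
  assumes "bij \<pi>"
  shows "perm_mat_act (inv \<pi>) (perm_mat_act \<pi> A) = A"
  using assms by (simp add: vec_eq_iff perm_mat_act_def bij_is_surj surj_f_inv_f)

lemma perm_mat_act_inv_right:
  assumes "bij \<pi>"
  shows "perm_mat_act \<pi> (perm_mat_act (inv \<pi>) A) = A"
  using assms by (simp add: vec_eq_iff perm_mat_act_def bij_is_inj)

lemma perm_mat_act_eq_iff: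
  assumes "bij \<pi>"
  shows "perm_mat_act \<pi> A = perm_mat_act \<pi> B \<longleftrightarrow> A = B"
  by (metis assms perm_mat_act_inv_left)

lemma perm_mat_act_invertible:
  fixes A :: "real^'n::finite^'n"
  assumes "bij \<pi>" "invertible A"
  shows "invertible (perm_mat_act \<pi> A)"
    and "matrix_inv (perm_mat_act \<pi> A) = perm_mat_act \<pi> (matrix_inv A)"
proof -
  have "perm_mat_act \<pi> A ** perm_mat_act \<pi> (matrix_inv A) = mat 1"
    using assms
    by (simp add: perm_mat_act_mult[symmetric] matrix_inv_right_left perm_mat_act_mat_1)
  then show "invertible (perm_mat_act \<pi> A)"
    and "matrix_inv (perm_mat_act \<pi> A) = perm_mat_act \<pi> (matrix_inv A)"
    using invertible_right_inverse matrix_inv_unique by blast+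
qed

lemma perm_mat_act_pos_diag:
  assumes "bij \<pi>" "pos_diag D"
  shows "pos_diag (perm_mat_act \<pi> D)"
  using assms by (simp add: pos_diag_def perm_mat_act_def bij_is_inj inj_eq)

lemma perm_mat_act_pos_def:
  fixes S :: "real^'n::finite^'n"
  assumes \<pi>: "bij \<pi>" and S: "pos_def_mat S"
  shows "pos_def_mat (perm_mat_act \<pi> S)"
  unfolding pos_def_mat_def
proof (intro conjI allI impI)
  show "transpose (perm_mat_act \<pi> S) = perm_mat_act \<pi> S"
    using S by (simp add: pos_def_mat_def perm_mat_act_transpose[symmetric])
  fix x :: "real^'n" assume "x \<noteq> 0"
  define y where "y = (\<chi> a. x $ inv \<pi> a)"
  have xy: "x $ i = y $ \<pi> i" for i
    using \<pi> by (simp add: y_def bij_is_inj)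
  have "y \<noteq> 0" using \<open>x \<noteq> 0\<close> by (auto simp: vec_eq_iff xy)
  have "x \<bullet> (perm_mat_act \<pi> S *v x)
      = (\<Sum>i\<in>UNIV. y $ \<pi> i * (\<Sum>j\<in>UNIV. S $ \<pi> i $ \<pi> j * y $ \<pi> j))"
    by (simp add: inner_vec_def matrix_vector_mult_def perm_mat_act_def xy)
  also have "\<dots> = (\<Sum>i\<in>UNIV. y $ \<pi> i * (\<Sum>j\<in>UNIV. S $ \<pi> i $ j * y $ j))"
    using sum_UNIV_reindex_bij[OF \<pi>, of "\<lambda>j. S $ \<pi> i $ j * y $ j" for i] by simp
  also have "\<dots> = (\<Sum>i\<in>UNIV. y $ i * (\<Sum>j\<in>UNIV. S $ i $ j * y $ j))"
    using sum_UNIV_reindex_bij[OF \<pi>, of "\<lambda>i. y $ i * (\<Sum>j\<in>UNIV. S $ i $ j * y $ j)"] by simp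
  also have "\<dots> = y \<bullet> (S *v y)"
    by (simp add: inner_vec_def matrix_vector_mult_def)
  finally show "x \<bullet> (perm_mat_act \<pi> S *v x) > 0"
    using S \<open>y \<noteq> 0\<close> by (simp add: pos_def_mat_def)
qed

lemma pos_def_invertible:
  fixes S :: "real^'n::finite^'n"
  assumes "pos_def_mat S"
  shows "invertible S"
  by (rule invertible_if_kernel_trivial)
    (use assms in \<open>metis pos_def_mat_def inner_zero_right less_irrefl\<close>)

lemma inner_symmetric_matrix:
  fixes A :: "real^'n::finite^'n"
  assumes "transpose A = A"
  shows "x \<bullet> (A *v y) = y \<bullet> (A *v x)"
  by (metis assms dot_lmul_matrix inner_commute transpose_matrix_vector)

lemma pos_def_matrix_inv:
  fixes S :: "real^'n::finite^'n"
  assumes S: "pos_def_mat S"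
  shows "pos_def_mat (matrix_inv S)"
  unfolding pos_def_mat_def
proof (intro conjI allI impI)
  have iS: "invertible S" using pos_def_invertible[OF S] .
  have St: "transpose S = S" using S by (simp add: pos_def_mat_def)
  have "S ** transpose (matrix_inv S) = mat 1"
    by (metis St matrix_inv_right_left(2)[OF iS] matrix_transpose_mul transpose_mat)
  then show "transpose (matrix_inv S) = matrix_inv S"
    using matrix_inv_unique by metis
  fix x :: "real^'n" assume "x \<noteq> 0"
  define y where "y = matrix_inv S *v x"
  have Sy: "S *v y = x"
    using matrix_inv_right_left(1)[OF iS] by (simp add: y_def matrix_vector_mul_assoc)
  then have "y \<noteq> 0" using \<open>x \<noteq> 0\<close> by auto
  have "x \<bullet> (matrix_inv S *v x) = y \<bullet> (S *v y)"
    using Sy by (simp add: y_def inner_commute)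
  then show "x \<bullet> (matrix_inv S *v x) > 0"
    using S \<open>y \<noteq> 0\<close> by (simp add: pos_def_mat_def)
qed

lemma matrix_mult_diagonal_right:
  assumes "\<And>i j. i \<noteq> j \<Longrightarrow> G $ i $ j = 0"
  shows "(X ** G) $ i $ j = X $ i $ j * G $ j $ j"
  unfolding matrix_matrix_mult_def
  using sum_UNIV_eq_single[of j "\<lambda>k. X $ i $ k * G $ k $ j"] assms by simp

lemma matrix_mult_diagonal_left:
  assumes "\<And>i j. i \<noteq> j \<Longrightarrow> G $ i $ j = 0"
  shows "(G ** X) $ i $ j = G $ i $ i * X $ i $ j"
  unfolding matrix_matrix_mult_def
  using sum_UNIV_eq_single[of i "\<lambda>k. G $ i $ k * X $ k $ j"] assms by simp

lemma pos_diag_invertible: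
  fixes D :: "real^'n::finite^'n"
  assumes D: "pos_diag D"
  shows "invertible D"
    and "pos_diag (matrix_inv D)"
proof -
  define E :: "real^'n^'n" where "E = (\<chi> i j. if i = j then 1 / D $ i $ i else 0)"
  have "(D ** E) $ i $ j = mat 1 $ i $ j" for i j
    using D by (auto simp: matrix_mult_diagonal_left pos_diag_def E_def mat_1_entry
        dest: less_imp_neq[symmetric])
  then have "D ** E = mat 1" by (simp add: vec_eq_iff)
  then show "invertible D" and "pos_diag (matrix_inv D)"
    using D invertible_right_inverse matrix_inv_unique[of D E]
    by (auto simp: pos_diag_def E_def)
qed

section \<open>The LDL factorisation of a positive definite matrix\<close>

lemma pos_def_leading_block_kernel:
  fixes A :: "real^('n::{finite,linorder})^('n::{finite,linorder})"
  assumes A: "pos_def_mat A"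
    and supp: "\<And>k. \<not> k < i \<Longrightarrow> x $ k = 0"
    and ker: "\<And>j. j < i \<Longrightarrow> (A *v x) $ j = 0"
  shows "x = 0"
proof -
  have "x $ j * (A *v x) $ j = 0" for j
    using supp ker by (cases "j < i") simp_all
  then have "x \<bullet> (A *v x) = 0"
    unfolding inner_vec_def inner_real_def by (rule sum.neutral[rule_format])
  then show ?thesis using A unfolding pos_def_mat_def by (metis less_irrefl)
qed

text \<open>
  Taking such rows as the rows of \<open>V\<close> makes \<open>V A V\<^sup>T\<close> diagonal. The row is \<open>e\<^sub>i - x\<close>, where \<open>x\<close>,
  supported on \<open>{k. k < i}\<close>, solves a system whose matrix is the leading \<open>i \<times> i\<close> block of \<open>A\<close>;
  bordered by the identity, that block is the matrix \<open>M\<close> below.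
\<close>

lemma pos_def_exists_conjugate_row:
  fixes A :: "real^('n::{finite,linorder})^('n::{finite,linorder})"
  assumes A: "pos_def_mat A"
  shows "\<exists>v. v $ i = 1 \<and> (\<forall>j. i < j \<longrightarrow> v $ j = 0) \<and> (\<forall>j. j < i \<longrightarrow> (A *v v) $ j = 0)"
proof -
  define M where
    "M = (\<chi> j k. if j < i then (if k < i then A $ j $ k else 0) else mat 1 $ j $ k)"
  have M_bottom: "(M *v x) $ j = x $ j" if "\<not> j < i" for x j
    unfolding matrix_vector_mult_def
    using sum_UNIV_eq_single[of j "\<lambda>k. M $ j $ k * x $ k"] that
    by (simp add: M_def mat_1_entry)
  have M_top: "(M *v x) $ j = (A *v x) $ j"
    if "j < i" and "\<And>k. \<not> k < i \<Longrightarrow> x $ k = 0" for x j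
    unfolding matrix_vector_mult_def vec_lambda_beta
    by (rule sum.cong) (use that in \<open>auto simp: M_def\<close>)
  have "invertible M"
  proof (rule invertible_if_kernel_trivial)
    fix x assume "M *v x = 0"
    then show "x = 0"
      using pos_def_leading_block_kernel[OF A] M_bottom M_top by (metis zero_index)
  qed
  define e where "e = axis i (1::real)"
  define x where "x = matrix_inv M *v (\<chi> j. if j < i then (A *v e) $ j else 0)"
  have Mx: "M *v x = (\<chi> j. if j < i then (A *v e) $ j else 0)"
    using matrix_inv_right_left(1)[OF \<open>invertible M\<close>]
    by (simp add: x_def matrix_vector_mul_assoc)
  have x_supp: "x $ k = 0" if "\<not> k < i" for k
    using M_bottom[OF that, of x] Mx that by simp
  have Ax: "(A *v x) $ j = (A *v e) $ j" if "j < i" for j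
    using M_top[OF that x_supp] Mx that by simp
  have "(e - x) $ i = 1" and "\<forall>j. i < j \<longrightarrow> (e - x) $ j = 0"
    using x_supp by (auto simp: e_def axis_def)
  moreover have "\<forall>j. j < i \<longrightarrow> (A *v (e - x)) $ j = 0"
    using Ax by (simp add: matrix_vector_mult_diff_distrib)
  ultimately show ?thesis by blast
qed

lemma matrix_congruence_entry:
  fixes X A Y :: "real^'n::finite^'n"
  shows "(X ** A ** transpose Y) $ i $ k = (X $ i) \<bullet> (A *v (Y $ k))"
proof -
  have "(X ** A ** transpose Y) $ i $ k
      = (\<Sum>l\<in>UNIV. \<Sum>m\<in>UNIV. X $ i $ m * (A $ m $ l * Y $ k $ l))"
    by (simp add: matrix_matrix_mult_def transpose_def sum_distrib_right mult.assoc)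
  also have "\<dots> = (\<Sum>m\<in>UNIV. X $ i $ m * (\<Sum>l\<in>UNIV. A $ m $ l * Y $ k $ l))"
    by (subst sum.swap) (simp add: sum_distrib_left)
  finally show ?thesis by (simp add: inner_vec_def matrix_vector_mult_def)
qed

lemma pos_def_ldl_exists:
  fixes A :: "real^('n::{finite,linorder})^('n::{finite,linorder})"
  assumes A: "pos_def_mat A"
  shows "\<exists>L D. strictly_lower L \<and> pos_diag D \<and>
           A = (mat 1 - L) ** matrix_inv D ** transpose (mat 1 - L)"
proof -
  obtain v where v: "\<And>i. v i $ i = 1" "\<And>i j. i < j \<Longrightarrow> v i $ j = 0"
    "\<And>i j. j < i \<Longrightarrow> (A *v v i) $ j = 0"
    using pos_def_exists_conjugate_row[OF A] by metis
  define V where "V = (\<chi> i. v i)"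
  have V: "unit_lower_triangular V"
    using v by (simp add: unit_lower_triangular_def lower_triangular_def V_def)
  have At: "transpose A = A" using A by (simp add: pos_def_mat_def)
  define G where "G = V ** A ** transpose V"
  have G: "G $ i $ k = v i \<bullet> (A *v v k)" for i k
    by (simp add: G_def matrix_congruence_entry V_def)
  have conj: "v a \<bullet> (A *v v c) = 0" if "a < c" for a c
  proof -
    have "v a $ j * (A *v v c) $ j = 0" for j
      using v(2)[of a j] v(3)[of j c] that by (cases "a < j") auto
    then show ?thesis
      unfolding inner_vec_def inner_real_def by (rule sum.neutral[rule_format])
  qed
  have "G $ i $ k = 0" if "i \<noteq> k" for i k
    using that conj inner_symmetric_matrix[OF At, of "v i" "v k"]
    by (cases "i < k") (auto simp: G not_less_iff_gr_or_eq)
  moreover have "G $ i $ i > 0" for i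
  proof -
    have "v i \<noteq> 0" using v(1)[of i] by (metis zero_index zero_neq_one)
    then show ?thesis using A by (simp add: G pos_def_mat_def)
  qed
  ultimately have pG: "pos_diag G" by (simp add: pos_diag_def)
  define W where "W = matrix_inv V"
  have W: "unit_lower_triangular W"
    using unit_lower_triangular_matrix_inv[OF V] by (simp add: W_def)
  have WV: "W ** V = mat 1"
    using matrix_inv_right_left(2)[OF unit_lower_triangular_invertible[OF V]] by (simp add: W_def)
  have "W ** G ** transpose W = (W ** V) ** A ** transpose (W ** V)"
    by (simp add: G_def matrix_mul_assoc matrix_transpose_mul)
  then have "A = W ** matrix_inv (matrix_inv G) ** transpose W"
    using WV by (simp add: matrix_inv_matrix_inv[OF pos_diag_invertible(1)[OF pG]])
  moreover have "strictly_lower (mat 1 - W)"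
    using W by (simp add: unit_lower_triangular_iff_strictly_lower)
  ultimately show ?thesis
    using pos_diag_invertible(2)[OF pG]
    by (intro exI[of _ "mat 1 - W"] exI[of _ "matrix_inv G"]) simp
qed

lemma unit_lower_congruence_to_diagonal:
  fixes M G1 G2 :: "real^('n::{finite,linorder})^('n::{finite,linorder})"
  assumes M: "unit_lower_triangular M" and pG1: "pos_diag G1" and pG2: "pos_diag G2"
    and MGM: "M ** G1 ** transpose M = G2"
  shows "M = mat 1"
proof -
  define K where "K = matrix_inv M"
  have K: "unit_lower_triangular K"
    using unit_lower_triangular_matrix_inv[OF M] by (simp add: K_def)
  have KM: "K ** M = mat 1"
    using matrix_inv_right_left(2)[OF unit_lower_triangular_invertible[OF M]] by (simp add: K_def)
  have "M ** G1 = M ** G1 ** transpose (K ** M)"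
    using KM by simp
  also have "\<dots> = G2 ** transpose K"
    using MGM by (simp add: matrix_transpose_mul matrix_mul_assoc)
  finally have MG: "M ** G1 = G2 ** transpose K" .
  have "M $ i $ j = 0" if "j < i" for i j
  proof -
    have "M $ i $ j * G1 $ j $ j = G2 $ i $ i * K $ j $ i"
      using arg_cong[OF MG, of "\<lambda>X. X $ i $ j"] pG1 pG2
      by (simp add: matrix_mult_diagonal_right matrix_mult_diagonal_left pos_diag_def
          transpose_def)
    moreover have "K $ j $ i = 0"
      using K that by (simp add: unit_lower_triangular_def lower_triangular_def)
    moreover have "G1 $ j $ j > 0" using pG1 by (simp add: pos_diag_def)
    ultimately show ?thesis by simp
  qed
  then show ?thesis
    using M by (auto simp: vec_eq_iff mat_1_entry unit_lower_triangular_def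
        lower_triangular_def neq_iff)
qed

lemma ldl_unique:
  fixes L1 L2 D1 D2 :: "real^('n::{finite,linorder})^('n::{finite,linorder})"
  assumes L1: "strictly_lower L1" and L2: "strictly_lower L2"
    and D1: "pos_diag D1" and D2: "pos_diag D2"
    and eq: "(mat 1 - L1) ** matrix_inv D1 ** transpose (mat 1 - L1) =
             (mat 1 - L2) ** matrix_inv D2 ** transpose (mat 1 - L2)"
  shows "L1 = L2"
proof -
  define W1 W2 where "W1 = mat 1 - L1" and "W2 = mat 1 - L2"
  have W1: "unit_lower_triangular W1" and W2: "unit_lower_triangular W2"
    using L1 L2 by (simp_all add: W1_def W2_def unit_lower_triangular_iff_strictly_lower)
  define M where "M = matrix_inv W2 ** W1"
  have M: "unit_lower_triangular M"
    using unit_lower_triangular_mult[OF unit_lower_triangular_matrix_inv[OF W2] W1]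
    by (simp add: M_def)
  have W2W2: "matrix_inv W2 ** W2 = mat 1"
    using matrix_inv_right_left(2)[OF unit_lower_triangular_invertible[OF W2]] .
  have "M ** matrix_inv D1 ** transpose M
      = matrix_inv W2 ** (W1 ** matrix_inv D1 ** transpose W1) ** transpose (matrix_inv W2)"
    by (simp add: M_def matrix_transpose_mul matrix_mul_assoc)
  also have "\<dots> =
      matrix_inv W2 ** (W2 ** matrix_inv D2 ** transpose W2) ** transpose (matrix_inv W2)"
    using eq by (simp add: W1_def W2_def)
  also have "\<dots> = (matrix_inv W2 ** W2) ** matrix_inv D2 ** transpose (matrix_inv W2 ** W2)"
    by (simp add: matrix_mul_assoc matrix_transpose_mul)
  also have "\<dots> = matrix_inv D2"
    using W2W2 by simp
  finally have "M = mat 1"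
    using unit_lower_congruence_to_diagonal[OF M] D1 D2 pos_diag_invertible(2) by blast
  then have "W1 = W2"
    by (metis M_def W2W2 matrix_inv_unique)
  then show ?thesis by (simp add: W1_def W2_def)
qed

lemma Btilde_eqI:
  fixes \<Sigma> L D :: "real^('n::{finite,linorder})^('n::{finite,linorder})"
  assumes "strictly_lower L" and "pos_diag D"
    and "perm_mat_act \<pi> (matrix_inv \<Sigma>) =
      (mat 1 - L) ** matrix_inv D ** transpose (mat 1 - L)"
  shows "Btilde \<Sigma> \<pi> = perm_mat_act (inv \<pi>) L"
proof -
  have "(THE L'. \<exists>D. strictly_lower L' \<and> pos_diag D \<and> perm_mat_act \<pi> (matrix_inv \<Sigma>) =
          (mat 1 - L') ** matrix_inv D ** transpose (mat 1 - L')) = L"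
    by (rule the_equality) (use assms ldl_unique in metis)+
  then show ?thesis by (simp add: Btilde_def)
qed

section \<open>Acyclic supports and topological orders\<close>

lemma rank_strict_total_order:
  fixes lt :: "'a::finite \<Rightarrow> 'a \<Rightarrow> bool"
  assumes irrefl: "\<And>a. \<not> lt a a" and trans: "\<And>a b c. lt a b \<Longrightarrow> lt b c \<Longrightarrow> lt a c"
    and total: "\<And>a b. a \<noteq> b \<Longrightarrow> lt a b \<or> lt b a"
  shows "lt a b \<longleftrightarrow> card {c. lt c a} < card {c. lt c b}"
    and "bij_betw (\<lambda>a. card {c. lt c a}) UNIV {..<card (UNIV :: 'a set)}"
proof -
  define rank where "rank a = card {c. lt c a}" for a
  have mono: "rank a < rank b" if "lt a b" for a b
  proof -
    have "{c. lt c a} \<subseteq> {c. lt c b}" using trans[OF _ that] by blast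
    moreover have "a \<in> {c. lt c b} - {c. lt c a}" using that irrefl by simp
    ultimately have "{c. lt c a} \<subset> {c. lt c b}" by blast
    then show ?thesis by (simp add: rank_def psubset_card_mono)
  qed
  have iff: "lt a b \<longleftrightarrow> rank a < rank b" for a b
    using mono[of a b] mono[of b a] total[of a b] by (cases "a = b") auto
  then show "lt a b \<longleftrightarrow> card {c. lt c a} < card {c. lt c b}" unfolding rank_def .
  have "inj rank"
  proof (rule injI)
    fix a b assume "rank a = rank b"
    then show "a = b" using total[of a b] mono[of a b] mono[of b a] by auto
  qed
  moreover have "rank a < card (UNIV :: 'a set)" for a
  proof -
    have "{c. lt c a} \<subset> UNIV" using irrefl by blast
    then show ?thesis by (simp add: rank_def psubset_card_mono)
  qed
  then have "rank ` UNIV \<subseteq> {..<card (UNIV :: 'a set)}" by auto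
  ultimately have "rank ` UNIV = {..<card (UNIV :: 'a set)}"
    by (simp add: card_image card_subset_eq)
  then show "bij_betw (\<lambda>a. card {c. lt c a}) UNIV {..<card (UNIV :: 'a set)}"
    using \<open>inj rank\<close> by (simp add: bij_betw_def rank_def[abs_def])
qed

lemma exists_bij_onto_order:
  fixes lt :: "'n::{finite,linorder} \<Rightarrow> 'n \<Rightarrow> bool"
  assumes "\<And>a. \<not> lt a a" and "\<And>a b c. lt a b \<Longrightarrow> lt b c \<Longrightarrow> lt a c"
    and "\<And>a b. a \<noteq> b \<Longrightarrow> lt a b \<or> lt b a"
  shows "\<exists>\<sigma> :: 'n \<Rightarrow> 'n. bij \<sigma> \<and> (\<forall>a b. lt a b \<longleftrightarrow> \<sigma> a < \<sigma> b)"
proof -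
  define r r0 where "r = (\<lambda>a. card {c. lt c a})" and "r0 = (\<lambda>a. card {c::'n. c < a})"
  have r: "lt a b \<longleftrightarrow> r a < r b" "bij_betw r UNIV {..<card (UNIV :: 'n set)}" for a b
    unfolding r_def by (rule rank_strict_total_order; use assms in blast)+
  have r0: "a < b \<longleftrightarrow> r0 a < r0 b" "bij_betw r0 UNIV {..<card (UNIV :: 'n set)}" for a b
    unfolding r0_def by (rule rank_strict_total_order; auto)+
  define \<sigma> where "\<sigma> = inv_into UNIV r0 \<circ> r"
  have "bij \<sigma>"
    unfolding \<sigma>_def using r(2) bij_betw_inv_into[OF r0(2)] by (rule bij_betw_trans)
  moreover have "r0 (\<sigma> a) = r a" for a
  proof -
    have "range r0 = range r" using r(2) r0(2) by (simp add: bij_betw_def)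
    then have "r a \<in> range r0" by simp
    then show ?thesis by (simp add: \<sigma>_def f_inv_into_f)
  qed
  then have "lt a b \<longleftrightarrow> \<sigma> a < \<sigma> b" for a b
    using r(1)[of a b] r0(1)[of "\<sigma> a" "\<sigma> b"] by presburger
  ultimately show ?thesis by blast
qed

lemma acyclic_card_successors_less:
  fixes R :: "('a::finite \<times> 'a) set"
  assumes "acyclic R" and "(a, b) \<in> R"
  shows "card {x. (b, x) \<in> R\<^sup>+} < card {x. (a, x) \<in> R\<^sup>+}"
proof -
  have "{x. (b, x) \<in> R\<^sup>+} \<subset> {x. (a, x) \<in> R\<^sup>+}"
    using assms trancl_into_trancl2[OF assms(2)] by (auto simp: acyclic_def)
  then show ?thesis by (simp add: psubset_card_mono)
qed

text \<open>
  A topological order: sort the vertices by the number of vertices reachable from them,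
  breaking ties by the order of \<open>'n\<close>.
\<close>

lemma acyclic_exists_descending_bij:
  fixes R :: "('n::{finite,linorder} \<times> 'n) set"
  assumes "acyclic R"
  shows "\<exists>\<pi> :: 'n \<Rightarrow> 'n. bij \<pi> \<and> (\<forall>i j. (\<pi> i, \<pi> j) \<in> R \<longrightarrow> j < i)"
proof -
  define h where "h a = card {x. (a, x) \<in> R\<^sup>+}" for a
  define lt where "lt a b \<longleftrightarrow> h a < h b \<or> (h a = h b \<and> a < b)" for a b
  obtain \<sigma> :: "'n \<Rightarrow> 'n" where \<sigma>: "bij \<sigma>" "\<And>a b. lt a b \<longleftrightarrow> \<sigma> a < \<sigma> b"
    using exists_bij_onto_order[of lt] unfolding lt_def by fastforce
  have "j < i" if "(inv \<sigma> i, inv \<sigma> j) \<in> R" for i j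
  proof -
    have "lt (inv \<sigma> j) (inv \<sigma> i)"
      using acyclic_card_successors_less[OF assms that] by (simp add: lt_def h_def)
    then show ?thesis using \<sigma> by (simp add: bij_is_surj surj_f_inv_f)
  qed
  with bij_imp_bij_inv[OF \<sigma>(1)] show ?thesis by blast
qed

lemma acyclic_if_descending:
  fixes f :: "'a \<Rightarrow> 'b::order"
  assumes "\<And>i j. (i, j) \<in> R \<Longrightarrow> f j < f i"
  shows "acyclic R"
proof -
  have "f j < f i" if "(i, j) \<in> R\<^sup>+" for i j
    using that by induction (use assms less_trans in blast)+
  then show ?thesis unfolding acyclic_def by blast
qed

lemma dag_mat_iff_perm_strictly_lower:
  fixes B :: "real^('n::{finite,linorder})^('n::{finite,linorder})"
  shows "dag_mat B \<longleftrightarrow> (\<exists>\<pi>. \<pi> permutes UNIV \<and> strictly_lower (perm_mat_act \<pi> B))"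
proof
  assume "dag_mat B"
  then obtain \<pi> :: "'n \<Rightarrow> 'n" where "bij \<pi>"
    and desc: "\<And>i j. B $ \<pi> i $ \<pi> j \<noteq> 0 \<Longrightarrow> j < i"
    using acyclic_exists_descending_bij[of "{(i, j). B $ i $ j \<noteq> 0}"]
    unfolding dag_mat_def by auto
  have "strictly_lower (perm_mat_act \<pi> B)"
    unfolding strictly_lower_def perm_mat_act_def using desc leD by fastforce
  then show "\<exists>\<pi>. \<pi> permutes UNIV \<and> strictly_lower (perm_mat_act \<pi> B)"
    using \<open>bij \<pi>\<close> bij_imp_permutes by blast
next
  assume "\<exists>\<pi>. \<pi> permutes UNIV \<and> strictly_lower (perm_mat_act \<pi> B)"
  then obtain \<pi> :: "'n \<Rightarrow> 'n" where "bij \<pi>" and L: "strictly_lower (perm_mat_act \<pi> B)"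
    using permutes_bij by blast
  have "inv \<pi> j < inv \<pi> i" if "B $ i $ j \<noteq> 0" for i j
  proof (rule ccontr)
    assume "\<not> inv \<pi> j < inv \<pi> i"
    then have "B $ \<pi> (inv \<pi> i) $ \<pi> (inv \<pi> j) = 0"
      using L by (simp add: strictly_lower_def perm_mat_act_def not_less)
    then show False
      using that \<open>bij \<pi>\<close> by (simp add: bij_is_surj surj_f_inv_f)
  qed
  then show "dag_mat B"
    unfolding dag_mat_def by (intro acyclic_if_descending[of _ "inv \<pi>"]) auto
qed

section \<open>The structural equation model\<close>

lemma cov_iff_precision:
  fixes \<Sigma> W \<Omega> :: "real^'n::finite^'n"
  assumes \<Sigma>: "invertible \<Sigma>" and W: "invertible W" and \<Omega>: "invertible \<Omega>"
  shows "\<Sigma> = transpose (matrix_inv W) ** \<Omega> ** matrix_inv W \<longleftrightarrow>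
         matrix_inv \<Sigma> = W ** matrix_inv \<Omega> ** transpose W"
proof -
  define P Q where "P = transpose (matrix_inv W) ** \<Omega> ** matrix_inv W"
    and "Q = W ** matrix_inv \<Omega> ** transpose W"
  have "P ** Q =
      transpose (matrix_inv W) ** (\<Omega> ** (matrix_inv W ** W) ** matrix_inv \<Omega>) ** transpose W"
    by (simp add: P_def Q_def matrix_mul_assoc)
  also have "\<dots> = transpose (matrix_inv W) ** transpose W"
    by (simp add: matrix_inv_right_left[OF W] matrix_inv_right_left[OF \<Omega>])
  also have "\<dots> = mat 1"
    by (metis matrix_transpose_mul matrix_inv_right_left(1)[OF W] transpose_mat)
  finally have PQ: "P ** Q = mat 1" .
  then have QP: "Q ** P = mat 1" using matrix_left_right_inverse by blast
  show ?thesis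
    unfolding P_def[symmetric] Q_def[symmetric]
    using matrix_inv_unique[OF PQ] matrix_inv_unique[OF QP] matrix_inv_matrix_inv[OF \<Sigma>]
    by metis
qed

lemma cov_iff_perm_ldl:
  fixes \<Sigma> B :: "real^('n::{finite,linorder})^('n::{finite,linorder})"
  assumes \<Sigma>: "pos_def_mat \<Sigma>" and \<pi>: "bij \<pi>" and L: "strictly_lower (perm_mat_act \<pi> B)"
  shows "(\<exists>\<Omega>. pos_diag \<Omega> \<and>
            \<Sigma> = transpose (matrix_inv (mat 1 - B)) ** \<Omega> ** matrix_inv (mat 1 - B))
     \<longleftrightarrow> (\<exists>D. pos_diag D \<and> perm_mat_act \<pi> (matrix_inv \<Sigma>) =
            (mat 1 - perm_mat_act \<pi> B) ** matrix_inv D ** transpose (mat 1 - perm_mat_act \<pi> B))"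
    (is "(\<exists>\<Omega>. pos_diag \<Omega> \<and> ?cov \<Omega>) \<longleftrightarrow> (\<exists>D. pos_diag D \<and> ?ldl D)")
proof -
  have \<pi>': "bij (inv \<pi>)" using \<pi> by (rule bij_imp_bij_inv)
  have PW: "perm_mat_act \<pi> (mat 1 - B) = mat 1 - perm_mat_act \<pi> B"
    using \<pi> by (simp add: perm_mat_act_diff perm_mat_act_mat_1)
  have "invertible (perm_mat_act \<pi> (mat 1 - B))"
    using L
    by (simp add: PW unit_lower_triangular_invertible unit_lower_triangular_iff_strictly_lower)
  then have W: "invertible (mat 1 - B)"
    using perm_mat_act_invertible(1)[OF \<pi>'] perm_mat_act_inv_left[OF \<pi>] by metis
  have cov_ldl: "?cov \<Omega> \<longleftrightarrow> ?ldl (perm_mat_act \<pi> \<Omega>)" if "pos_diag \<Omega>" for \<Omega>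
  proof -
    have \<Omega>: "invertible \<Omega>" using that by (rule pos_diag_invertible)
    have "?cov \<Omega> \<longleftrightarrow> matrix_inv \<Sigma> = (mat 1 - B) ** matrix_inv \<Omega> ** transpose (mat 1 - B)"
      using cov_iff_precision[OF pos_def_invertible[OF \<Sigma>] W \<Omega>] .
    also have "\<dots> \<longleftrightarrow> perm_mat_act \<pi> (matrix_inv \<Sigma>) =
        perm_mat_act \<pi> ((mat 1 - B) ** matrix_inv \<Omega> ** transpose (mat 1 - B))"
      by (rule perm_mat_act_eq_iff[OF \<pi>, symmetric])
    also have "\<dots> \<longleftrightarrow> ?ldl (perm_mat_act \<pi> \<Omega>)"
      by (simp add: perm_mat_act_mult[OF \<pi>] perm_mat_act_transpose PW
          perm_mat_act_invertible(2)[OF \<pi> \<Omega>])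
    finally show ?thesis .
  qed
  show ?thesis
  proof
    assume "\<exists>\<Omega>. pos_diag \<Omega> \<and> ?cov \<Omega>"
    then show "\<exists>D. pos_diag D \<and> ?ldl D"
      using cov_ldl perm_mat_act_pos_diag[OF \<pi>] by blast
  next
    assume "\<exists>D. pos_diag D \<and> ?ldl D"
    then obtain D where "pos_diag D" "?ldl D" by blast
    then show "\<exists>\<Omega>. pos_diag \<Omega> \<and> ?cov \<Omega>"
      using cov_ldl[of "perm_mat_act (inv \<pi>) D"] perm_mat_act_pos_diag[OF \<pi>']
        perm_mat_act_inv_right[OF \<pi>] by metis
  qed
qed

lemma Btilde_perm_ldl:
  fixes \<Sigma> :: "real^('n::{finite,linorder})^('n::{finite,linorder})"
  assumes "pos_def_mat \<Sigma>" and \<pi>: "bij \<pi>"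
  defines "L \<equiv> perm_mat_act \<pi> (Btilde \<Sigma> \<pi>)"
  shows "strictly_lower L \<and> (\<exists>D. pos_diag D \<and>
           perm_mat_act \<pi> (matrix_inv \<Sigma>) = (mat 1 - L) ** matrix_inv D ** transpose (mat 1 - L))"
proof -
  obtain L' D where L': "strictly_lower L'" and D: "pos_diag D"
    and ldl: "perm_mat_act \<pi> (matrix_inv \<Sigma>) = (mat 1 - L') ** matrix_inv D ** transpose (mat 1 - L')"
    using pos_def_ldl_exists[OF perm_mat_act_pos_def[OF \<pi> pos_def_matrix_inv[OF assms(1)]]]
    by blast
  have "L = L'"
    unfolding L_def Btilde_eqI[OF L' D ldl] by (rule perm_mat_act_inv_right[OF \<pi>])
  then show ?thesis using L' D ldl by blast
qed

theorem lemma1: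
  fixes \<Sigma> :: "real^('n::{finite,linorder})^('n::{finite,linorder})"
  assumes "pos_def_mat \<Sigma>"
  shows "{B. dag_mat B \<and> (\<exists>\<Omega>. pos_diag \<Omega> \<and>
             \<Sigma> = transpose (matrix_inv (mat 1 - B)) ** \<Omega> ** matrix_inv (mat 1 - B))}
         = {Btilde \<Sigma> \<pi> | \<pi>. \<pi> permutes (UNIV :: 'n set)}"
proof (intro equalityI subsetI)
  fix B assume B: "B \<in> {B. dag_mat B \<and> (\<exists>\<Omega>. pos_diag \<Omega> \<and>
             \<Sigma> = transpose (matrix_inv (mat 1 - B)) ** \<Omega> ** matrix_inv (mat 1 - B))}"
  then obtain \<pi> where \<pi>: "\<pi> permutes UNIV" and L: "strictly_lower (perm_mat_act \<pi> B)"
    using dag_mat_iff_perm_strictly_lower by blast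
  then obtain D where "pos_diag D" and "perm_mat_act \<pi> (matrix_inv \<Sigma>) =
      (mat 1 - perm_mat_act \<pi> B) ** matrix_inv D ** transpose (mat 1 - perm_mat_act \<pi> B)"
    using B cov_iff_perm_ldl[OF assms permutes_bij[OF \<pi>] L] by blast
  then have "Btilde \<Sigma> \<pi> = B"
    using Btilde_eqI[OF L] perm_mat_act_inv_left[OF permutes_bij[OF \<pi>]] by metis
  then show "B \<in> {Btilde \<Sigma> \<pi> | \<pi>. \<pi> permutes UNIV}" using \<pi> by blast
next
  fix B assume "B \<in> {Btilde \<Sigma> \<pi> | \<pi>. \<pi> permutes UNIV}"
  then obtain \<pi> where \<pi>: "\<pi> permutes UNIV" and "B = Btilde \<Sigma> \<pi>" by blast
  then have ldl: "strictly_lower (perm_mat_act \<pi> B) \<and> (\<exists>D. pos_diag D \<and>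
      perm_mat_act \<pi> (matrix_inv \<Sigma>) =
        (mat 1 - perm_mat_act \<pi> B) ** matrix_inv D ** transpose (mat 1 - perm_mat_act \<pi> B))"
    using Btilde_perm_ldl[OF assms permutes_bij[OF \<pi>]] by simp
  then show "B \<in> {B. dag_mat B \<and> (\<exists>\<Omega>. pos_diag \<Omega> \<and>
             \<Sigma> = transpose (matrix_inv (mat 1 - B)) ** \<Omega> ** matrix_inv (mat 1 - B))}"
    using dag_mat_iff_perm_strictly_lower \<pi> cov_iff_perm_ldl[OF assms permutes_bij[OF \<pi>]] by blast
qed

end
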